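(* Let $0<1/n_0\ll 1/r_1\ll\tau,1/K$ where $\tau<1$, $K\geq 1$ and $1-\tau-7\tau^{1/4}/K>0$, and let $t,n\in\mathbb N$ with $n\geq n_0$. If $\mathcal H$ is an $n$-vertex hypergraph with codegree at most $t$ such that every edge $e$ satisfies $|V(e)|\geq r_1$, then there exists a linear ordering $\preceq$ of the edges of $\mathcal H$ such that at least one of the following holds. (a) Every $e\in\mathcal H$ satisfies $\overleftarrow{d}(e)\leq t(1-\tau)n$. (b) There is a set $\mathcal W\subseteq\mathcal H$ such that (W1) $\max_{e\in\mathcal W}|V(e)|\leq(1+3\tau^{1/4}K^3)\min_{e\in\mathcal W}|V(e)|$ and (W2) $\mathrm{vol}_{\mathcal H}(\mathcal W)\geq t\,\frac{(1-\tau-7\tau^{1/4}/K)^2}{1+3\tau^{1/4}K^3}$; and moreover, if $e^*$ is the last edge of $\mathcal W$ in $\preceq$, then (O1) every $f\in\mathcal H$ with $e^*\preceq f$ and $f\neq e^*$ satisfies $\overleftarrow{d}(f)\leq t(1-\tau)n$, and (O2) all $e,f\in\mathcal H$ with $f\preceq e\preceq e^*$ satisfy $|V(f)|\geq|V(e)|$.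
   Context: Constant hierarchies: a statement holding whenever $0<a\ll b\le 1$ means there is a non-decreasing function $f:(0,1]\to(0,1]$ such that it holds for all $a,b$ with $a\leq f(b)$; longer hierarchies (and hierarchies with several constants on the right) are defined analogously, constants being chosen from right to left. A hypergraph $\mathcal H$ has a finite vertex set $V(\mathcal H)$ and a finite set of edges, each edge $e$ with a nonempty set $V(e)\subseteq V(\mathcal H)$ (multiple edges allowed); $n$-vertex means $|V(\mathcal H)|=n$. The codegree of $\mathcal H$ is the maximum over distinct vertices $u,v$ of the number of edges containing both. For $S\subseteq\mathcal H$, $\mathrm{vol}_{\mathcal H}(S)=\sum_{e\in S}\binom{|V(e)|}{2}/\binom{n}{2}$. For an edge $e$, $N(e)$ is the set of edges $f\neq e$ with $V(e)\cap V(f)\neq\emptyset$. Given a linear ordering $\preceq$ of the edges, $\overleftarrow{d}(e)=|\{f\in N(e): f\preceq e\}|$. *)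

theory Defs
  imports Complex_Main
begin

text \<open>A hypergraph: vertex set VH, edge index set EH (multiple edges allowed,
  since distinct indices may carry the same vertex set), and Ve e = V(e).\<close>

definition hypergraph :: "'v set \<Rightarrow> 'e set \<Rightarrow> ('e \<Rightarrow> 'v set) \<Rightarrow> bool" where
  "hypergraph VH EH Ve \<longleftrightarrow> finite VH \<and> finite EH \<and>
     (\<forall>e\<in>EH. Ve e \<noteq> {} \<and> Ve e \<subseteq> VH)"

definition codegree_le :: "'v set \<Rightarrow> 'e set \<Rightarrow> ('e \<Rightarrow> 'v set) \<Rightarrow> nat \<Rightarrow> bool" where
  "codegree_le VH EH Ve t \<longleftrightarrow>
     (\<forall>u\<in>VH. \<forall>v\<in>VH. u \<noteq> v \<longrightarrow> card {e\<in>EH. u \<in> Ve e \<and> v \<in> Ve e} \<le> t)"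

definition vol :: "'v set \<Rightarrow> ('e \<Rightarrow> 'v set) \<Rightarrow> 'e set \<Rightarrow> real" where
  "vol VH Ve S = (\<Sum>e\<in>S. real (card (Ve e) choose 2)) / real (card VH choose 2)"

definition nbhd :: "'e set \<Rightarrow> ('e \<Rightarrow> 'v set) \<Rightarrow> 'e \<Rightarrow> 'e set" where
  "nbhd EH Ve e = {f\<in>EH. f \<noteq> e \<and> Ve e \<inter> Ve f \<noteq> {}}"

text \<open>Back-degree w.r.t. the ordering R, where (f,e) \<in> R means f \<preceq> e.\<close>
definition back_deg :: "'e set \<Rightarrow> ('e \<Rightarrow> 'v set) \<Rightarrow> ('e \<times> 'e) set \<Rightarrow> 'e \<Rightarrow> nat" where
  "back_deg EH Ve R e = card {f\<in>nbhd EH Ve e. (f, e) \<in> R}"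

definition nondecr2 :: "(real \<Rightarrow> real \<Rightarrow> real) \<Rightarrow> bool" where
  "nondecr2 f \<longleftrightarrow> (\<forall>a b a' b'. 0 < a \<and> a \<le> a' \<and> a' \<le> 1 \<and> 0 < b \<and> b \<le> b' \<and> b' \<le> 1
      \<longrightarrow> f a b \<le> f a' b') \<and>
     (\<forall>a b. 0 < a \<and> a \<le> 1 \<and> 0 < b \<and> b \<le> 1 \<longrightarrow> 0 < f a b \<and> f a b \<le> 1)"

end

theory Submission
  imports Defs
begin

(* Repeatedly remove an edge with at most B = t(1 - tau)n neighbours among the remaining
   edges and put the removed edges last, in reverse order of removal: each of them then has
   back-degree at most B. The edges never removed form a core C in which every edge has more
   than B neighbours inside C; C comes first, sorted by decreasing size. If C is empty, (a)
   holds. Otherwise let e* be the last edge of C, which has the least size s in C, and let W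
   consist of the edges of C of size at most (1 + 3 tau^(1/4) K^3) s; then (W1), (O1) and (O2)
   are immediate.

   For (W2), the lambda-light load of a vertex v is the sum of |g| - 1 over the edges g of C
   through v of size at most lambda. By the codegree bound the sum of |g| - 1 over all edges
   through v is at most t(n - 1), so, for lambda > s, at most L/(s - 1) + (t(n - 1) - L)/(lambda - 1)
   edges of C pass through v, where L is the light load of v. Since e* has more than B
   neighbours in C, some vertex v0 of e* has a large light load, i.e. many small edges of C
   contain v0; each of them also has more than B neighbours in C, so its other vertices carry a
   large light load. Summing over these edges and applying the codegree bound once more bounds
   the sum of |g|(|g| - 1) over g in W from below, and this sum is n(n - 1) times the volume of W. *)

section \<open>Linear orders\<close>

lemma linear_order_on_insert_greatest:
  assumes lin: "linear_order_on S R" and sub: "R \<subseteq> S \<times> S" and e: "e \<notin> S"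
  shows "linear_order_on (insert e S) (R \<union> insert e S \<times> {e})"
proof -
  from lin have refl: "\<forall>x\<in>S. (x, x) \<in> R" and tr: "trans R" and an: "antisym R"
    and tot: "total_on S R"
    unfolding linear_order_on_def partial_order_on_def preorder_on_def refl_on_def by auto
  show ?thesis
    unfolding linear_order_on_def partial_order_on_def preorder_on_def refl_on_def
  proof (intro conjI)
    show "R \<union> insert e S \<times> {e} \<subseteq> insert e S \<times> insert e S" using sub by auto
    show "\<forall>x\<in>insert e S. (x, x) \<in> R \<union> insert e S \<times> {e}" using refl by auto
    show "trans (R \<union> insert e S \<times> {e})"
      unfolding trans_def using tr sub e by (auto dest: transD)
    show "antisym (R \<union> insert e S \<times> {e})"
      unfolding antisym_def using an sub e by (auto dest: antisymD)
    show "total_on (insert e S) (R \<union> insert e S \<times> {e})"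
      using tot unfolding total_on_def by auto
  qed
qed

lemma linear_order_on_finite_has_greatest:
  assumes lin: "linear_order_on S R" and "finite A" "A \<noteq> {}" "A \<subseteq> S"
  shows "\<exists>m\<in>A. \<forall>x\<in>A. (x, m) \<in> R"
  using assms(2-4)
proof (induction A rule: finite_ne_induct)
  case (singleton x)
  then show ?case using lin unfolding linear_order_on_def partial_order_on_def
      preorder_on_def refl_on_def by auto
next
  case (insert x F)
  then obtain m where m: "m \<in> F" "\<forall>y\<in>F. (y, m) \<in> R" by auto
  have "x \<in> S" "m \<in> S" "x \<noteq> m" using insert m by auto
  then have "(x, m) \<in> R \<or> (m, x) \<in> R"
    using lin unfolding linear_order_on_def total_on_def by blast
  then show ?case
  proof
    assume "(x, m) \<in> R"
    then show ?case using m by auto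
  next
    assume "(m, x) \<in> R"
    moreover have "trans R" "(x, x) \<in> R"
      using lin \<open>x \<in> S\<close> unfolding linear_order_on_def partial_order_on_def
        preorder_on_def refl_on_def by auto
    ultimately show ?case using m by (auto dest: transD)
  qed
qed

lemma initial_segment_eq:
  assumes lin: "linear_order_on S R" and "C \<subseteq> S"
    and before: "\<forall>x\<in>C. \<forall>y\<in>S - C. (x, y) \<in> R"
    and m: "m \<in> C" "\<forall>x\<in>C. (x, m) \<in> R"
  shows "{x\<in>S. (x, m) \<in> R} = C"
proof -
  have "antisym R" using lin unfolding linear_order_on_def partial_order_on_def by auto
  then have "x \<in> C" if "x \<in> S" "(x, m) \<in> R" for x
    using that before m by (auto dest: antisymD)
  then show ?thesis using m \<open>C \<subseteq> S\<close> by auto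
qed

lemma exists_size_sorted_linear_order:
  fixes sz :: "'e \<Rightarrow> nat"
  assumes "finite S"
  shows "\<exists>R. R \<subseteq> S \<times> S \<and> linear_order_on S R \<and> (\<forall>(f, e)\<in>R. sz e \<le> sz f)"
  using assms
proof (induction S rule: finite_psubset_induct)
  case (psubset S)
  show ?case
  proof (cases "S = {}")
    case True
    then show ?thesis by auto
  next
    case False
    have "Min (sz ` S) \<in> sz ` S" using False psubset.hyps by simp
    then obtain e where e: "e \<in> S" "sz e = Min (sz ` S)" by auto
    then have emin: "\<forall>x\<in>S. sz e \<le> sz x" using psubset.hyps by simp
    obtain R where R: "R \<subseteq> (S - {e}) \<times> (S - {e})" "linear_order_on (S - {e}) R"
      "\<forall>(f, g)\<in>R. sz g \<le> sz f"
      using psubset.IH[of "S - {e}"] e by blast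
    have "insert e (S - {e}) = S" using e by auto
    then have "linear_order_on S (R \<union> S \<times> {e})"
      using linear_order_on_insert_greatest[OF R(2,1), of e] by simp
    moreover have "R \<union> S \<times> {e} \<subseteq> S \<times> S" using R(1) e(1) by blast
    moreover have "\<forall>(f, g)\<in>R \<union> S \<times> {e}. sz g \<le> sz f" using R(3) emin by blast
    ultimately show ?thesis by blast
  qed
qed

section \<open>Peeling orders\<close>

(* The edges outside C were removed greedily, each with at most B neighbours among the edges
   not yet removed; they follow C in reverse order of removal. *)
definition peeling_order ::
    "'e set \<Rightarrow> ('e \<Rightarrow> 'v set) \<Rightarrow> real \<Rightarrow> 'e set \<Rightarrow> ('e \<times> 'e) set \<Rightarrow> 'e set \<Rightarrow> bool" where
  "peeling_order EH Ve B S R C \<longleftrightarrow> R \<subseteq> S \<times> S \<and> linear_order_on S R \<and> C \<subseteq> S \<and>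
     (\<forall>x\<in>C. \<forall>y\<in>S - C. (x, y) \<in> R) \<and>
     (\<forall>y\<in>S - C. real (back_deg EH Ve R y) \<le> B) \<and>
     (\<forall>c\<in>C. B < real (card (nbhd EH Ve c \<inter> C))) \<and>
     (\<forall>(f, e)\<in>R. e \<in> C \<longrightarrow> f \<in> C \<longrightarrow> card (Ve e) \<le> card (Ve f))"

lemma peeling_order_whole_core:
  assumes "finite S" and core: "\<forall>c\<in>S. B < real (card (nbhd EH Ve c \<inter> S))"
  shows "\<exists>R. peeling_order EH Ve B S R S"
proof -
  obtain R where R: "R \<subseteq> S \<times> S" "linear_order_on S R"
    "\<forall>(f, e)\<in>R. card (Ve e) \<le> card (Ve f)"
    using exists_size_sorted_linear_order[OF \<open>finite S\<close>, where sz = "\<lambda>e. card (Ve e)"] by blast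
  have "peeling_order EH Ve B S R S" unfolding peeling_order_def using R core by auto
  then show ?thesis ..
qed

lemma peeling_order_insert_last:
  assumes P: "peeling_order EH Ve B S R C" and e: "e \<notin> S"
    and deg: "real (card (nbhd EH Ve e \<inter> S)) \<le> B"
  shows "peeling_order EH Ve B (insert e S) (R \<union> insert e S \<times> {e}) C"
proof -
  let ?R = "R \<union> insert e S \<times> {e}"
  have R: "R \<subseteq> S \<times> S" "linear_order_on S R" "C \<subseteq> S"
    "\<forall>x\<in>C. \<forall>y\<in>S - C. (x, y) \<in> R" "\<forall>y\<in>S - C. real (back_deg EH Ve R y) \<le> B"
    using P unfolding peeling_order_def by auto
  have "back_deg EH Ve ?R e = card (nbhd EH Ve e \<inter> S)"
    unfolding back_deg_def using R(1) e by (intro arg_cong[where f = card]) (auto simp: nbhd_def)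
  moreover have "back_deg EH Ve ?R y = back_deg EH Ve R y" if "y \<in> S" for y
    unfolding back_deg_def using that e by (intro arg_cong[where f = card]) auto
  ultimately have "\<forall>y\<in>insert e S - C. real (back_deg EH Ve ?R y) \<le> B"
    using R(5) deg by auto
  moreover have "linear_order_on (insert e S) ?R"
    by (rule linear_order_on_insert_greatest[OF R(2,1) e])
  moreover have "?R \<subseteq> insert e S \<times> insert e S" using R(1) by blast
  moreover have "\<forall>x\<in>C. \<forall>y\<in>insert e S - C. (x, y) \<in> ?R" using R(3,4) by blast
  moreover have "\<forall>(f, g)\<in>?R. g \<in> C \<longrightarrow> f \<in> C \<longrightarrow> card (Ve g) \<le> card (Ve f)"
    using P R(3) e unfolding peeling_order_def by blast
  ultimately show ?thesis using P R(3) unfolding peeling_order_def by blast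
qed

lemma exists_peeling_order:
  assumes "finite S"
  shows "\<exists>R C. peeling_order EH Ve B S R C"
  using assms
proof (induction S rule: finite_psubset_induct)
  case (psubset S)
  show ?case
  proof (cases "\<exists>e\<in>S. real (card (nbhd EH Ve e \<inter> S)) \<le> B")
    case False
    then show ?thesis using peeling_order_whole_core[OF psubset.hyps] by (meson not_le)
  next
    case True
    then obtain e where e: "e \<in> S" "real (card (nbhd EH Ve e \<inter> S)) \<le> B" by blast
    then obtain R C where "peeling_order EH Ve B (S - {e}) R C"
      using psubset.IH[of "S - {e}"] by blast
    moreover have "nbhd EH Ve e \<inter> (S - {e}) = nbhd EH Ve e \<inter> S" by (auto simp: nbhd_def)
    ultimately have "peeling_order EH Ve B (insert e (S - {e})) (R \<union> insert e (S - {e}) \<times> {e}) C"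
      using peeling_order_insert_last[of EH Ve B "S - {e}" R C e] e by simp
    then show ?thesis using e(1) by (metis insert_Diff)
  qed
qed

section \<open>Counting under bounded codegree\<close>

lemma hypergraph_edgeD:
  assumes "hypergraph VH EH Ve" and "e \<in> EH"
  shows "Ve e \<subseteq> VH" and "finite (Ve e)" and "0 < card (Ve e)"
proof -
  show "Ve e \<subseteq> VH" using assms unfolding hypergraph_def by blast
  then show "finite (Ve e)" using assms unfolding hypergraph_def by (meson finite_subset)
  then show "0 < card (Ve e)" using assms unfolding hypergraph_def by auto
qed

lemma codegree_double_count:
  assumes hg: "hypergraph VH EH Ve" and cd: "codegree_le VH EH Ve t"
    and G: "G \<subseteq> EH" and v0: "v0 \<in> VH" and Gv: "\<forall>g\<in>G. v0 \<in> Ve g"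
    and F: "\<forall>u\<in>VH. 0 \<le> F u"
  shows "(\<Sum>g\<in>G. \<Sum>u\<in>Ve g - {v0}. F u) \<le> real t * (\<Sum>u\<in>VH - {v0}. F u)"
proof -
  have finE: "finite EH" and finV: "finite VH"
    using hg unfolding hypergraph_def by auto
  have finG: "finite G" using G finE finite_subset by blast
  have "(\<Sum>g\<in>G. \<Sum>u\<in>Ve g - {v0}. F u) = (\<Sum>g\<in>G. \<Sum>u\<in>{u\<in>VH - {v0}. u \<in> Ve g}. F u)"
    using G hypergraph_edgeD(1)[OF hg] by (intro sum.cong refl) blast+
  also have "\<dots> = (\<Sum>u\<in>VH - {v0}. \<Sum>g\<in>{g\<in>G. u \<in> Ve g}. F u)"
    using finG finV by (intro sum.swap_restrict) auto
  also have "\<dots> \<le> (\<Sum>u\<in>VH - {v0}. real t * F u)"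
  proof (rule sum_mono)
    fix u assume u: "u \<in> VH - {v0}"
    have "{g\<in>G. u \<in> Ve g} \<subseteq> {e\<in>EH. u \<in> Ve e \<and> v0 \<in> Ve e}" using G Gv by auto
    then have "card {g\<in>G. u \<in> Ve g} \<le> card {e\<in>EH. u \<in> Ve e \<and> v0 \<in> Ve e}"
      using finE by (intro card_mono) auto
    also have "\<dots> \<le> t" using cd u v0 unfolding codegree_le_def by auto
    finally show "(\<Sum>g\<in>{g\<in>G. u \<in> Ve g}. F u) \<le> real t * F u"
      using F u by (simp add: mult_right_mono)
  qed
  also have "\<dots> = real t * (\<Sum>u\<in>VH - {v0}. F u)" by (simp add: sum_distrib_left)
  finally show ?thesis .
qed

lemma sum_edges_through_vertex_le:
  assumes hg: "hypergraph VH EH Ve" and cd: "codegree_le VH EH Ve t"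
    and D: "D \<subseteq> EH" and v: "v \<in> VH"
  shows "(\<Sum>g\<in>{g\<in>D. v \<in> Ve g}. real (card (Ve g)) - 1) \<le> real t * (real (card VH) - 1)"
proof -
  have "1 \<le> card (Ve g)" "finite (Ve g)" if "g \<in> D" for g
    using that D hypergraph_edgeD(2,3)[OF hg] by (auto simp: Suc_le_eq)
  then have "(\<Sum>g\<in>{g\<in>D. v \<in> Ve g}. real (card (Ve g)) - 1)
      = (\<Sum>g\<in>{g\<in>D. v \<in> Ve g}. \<Sum>u\<in>Ve g - {v}. 1)"
    by (intro sum.cong refl) auto
  also have "\<dots> \<le> real t * (\<Sum>u\<in>VH - {v}. 1)"
    using D by (intro codegree_double_count[OF hg cd _ v]) auto
  also have "\<dots> = real t * (real (card VH) - 1)"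
  proof -
    have "0 < card VH" using v hg unfolding hypergraph_def card_gt_0_iff by auto
    then show ?thesis using v by (simp add: Suc_le_eq)
  qed
  finally show ?thesis .
qed

definition light_load :: "'e set \<Rightarrow> ('e \<Rightarrow> 'v set) \<Rightarrow> real \<Rightarrow> 'v \<Rightarrow> real" where
  "light_load C Ve lam v = (\<Sum>g\<in>{g\<in>C. v \<in> Ve g \<and> real (card (Ve g)) \<le> lam}. real (card (Ve g)) - 1)"

lemma light_load_nonneg:
  assumes hg: "hypergraph VH EH Ve" and C: "C \<subseteq> EH"
  shows "0 \<le> light_load C Ve lam v"
  unfolding light_load_def using C hypergraph_edgeD(3)[OF hg]
  by (intro sum_nonneg) (auto simp: Suc_le_eq)

lemma light_load_le:
  assumes hg: "hypergraph VH EH Ve" and cd: "codegree_le VH EH Ve t"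
    and C: "C \<subseteq> EH" and v: "v \<in> VH"
  shows "light_load C Ve lam v \<le> real t * (real (card VH) - 1)"
proof -
  have "finite {g\<in>C. v \<in> Ve g}"
    using C hg unfolding hypergraph_def by (auto intro: finite_subset)
  then have "light_load C Ve lam v \<le> (\<Sum>g\<in>{g\<in>C. v \<in> Ve g}. real (card (Ve g)) - 1)"
    unfolding light_load_def using C hypergraph_edgeD(3)[OF hg]
    by (intro sum_mono2) (auto simp: Suc_le_eq)
  also have "\<dots> \<le> real t * (real (card VH) - 1)"
    by (rule sum_edges_through_vertex_le[OF hg cd C v])
  finally show ?thesis .
qed

lemma light_load_le_card:
  "light_load C Ve lam v \<le> real (card {g\<in>C. v \<in> Ve g \<and> real (card (Ve g)) \<le> lam}) * (lam - 1)"
proof -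
  have "light_load C Ve lam v \<le> (\<Sum>g\<in>{g\<in>C. v \<in> Ve g \<and> real (card (Ve g)) \<le> lam}. lam - 1)"
    unfolding light_load_def by (intro sum_mono) auto
  then show ?thesis by simp
qed

(* An edge of size at most lam contributes at least s - 1 to the light load of v; a larger one
   contributes at least lam - 1 to the total t(n - 1). *)
lemma card_edges_through_vertex_le:
  assumes hg: "hypergraph VH EH Ve" and cd: "codegree_le VH EH Ve t"
    and C: "C \<subseteq> EH" and v: "v \<in> VH"
    and smin: "\<forall>g\<in>C. s \<le> card (Ve g)" and s2: "2 \<le> s" and lam: "real s < lam"
  shows "real (card {g\<in>C. v \<in> Ve g}) \<le> (1/(real s - 1) - 1/(lam - 1)) * light_load C Ve lam v
            + real t * (real (card VH) - 1) / (lam - 1)"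
proof -
  define M where "M = real t * (real (card VH) - 1)"
  have finE: "finite EH" using hg unfolding hypergraph_def by blast
  let ?A = "{g\<in>C. v \<in> Ve g \<and> real (card (Ve g)) \<le> lam}"
  let ?B = "{g\<in>C. v \<in> Ve g \<and> \<not> real (card (Ve g)) \<le> lam}"
  have finA: "finite ?A" by (rule finite_subset[OF _ finE]) (use C in auto)
  have finB: "finite ?B" by (rule finite_subset[OF _ finE]) (use C in auto)
  have un: "{g\<in>C. v \<in> Ve g} = ?A \<union> ?B" by auto
  have cardAB: "card {g\<in>C. v \<in> Ve g} = card ?A + card ?B"
    unfolding un by (rule card_Un_disjoint[OF finA finB]) auto
  have tot: "(\<Sum>g\<in>{g\<in>C. v \<in> Ve g}. real (card (Ve g)) - 1) \<le> M"
    unfolding M_def by (rule sum_edges_through_vertex_le[OF hg cd C v])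
  have splitsum: "(\<Sum>g\<in>{g\<in>C. v \<in> Ve g}. real (card (Ve g)) - 1)
      = light_load C Ve lam v + (\<Sum>g\<in>?B. real (card (Ve g)) - 1)"
    unfolding light_load_def un by (rule sum.union_disjoint[OF finA finB]) auto
  have s1: "real s - 1 > 0" using s2 by simp
  have l1: "lam - 1 > 0" using lam s2 by simp
  have "real (card ?A) * (real s - 1) = (\<Sum>g\<in>?A. real s - 1)" by simp
  also have "\<dots> \<le> light_load C Ve lam v" unfolding light_load_def
    by (rule sum_mono) (use smin in auto)
  finally have a: "real (card ?A) \<le> light_load C Ve lam v / (real s - 1)"
    using s1 by (simp add: pos_le_divide_eq)
  have "real (card ?B) * (lam - 1) = (\<Sum>g\<in>?B. lam - 1)" by simp
  also have "\<dots> \<le> (\<Sum>g\<in>?B. real (card (Ve g)) - 1)"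
    by (rule sum_mono) auto
  finally have b: "real (card ?B) \<le> (M - light_load C Ve lam v) / (lam - 1)"
    using l1 tot splitsum by (simp add: pos_le_divide_eq)
  have "real (card {g\<in>C. v \<in> Ve g}) \<le> light_load C Ve lam v / (real s - 1) + (M - light_load C Ve lam v) / (lam - 1)"
    using a b cardAB by simp
  also have "\<dots> = (1/(real s - 1) - 1/(lam - 1)) * light_load C Ve lam v + M / (lam - 1)"
    by (simp add: diff_divide_distrib algebra_simps)
  finally show ?thesis unfolding M_def .
qed

lemma card_nbhd_inter_le:
  assumes hg: "hypergraph VH EH Ve" and cd: "codegree_le VH EH Ve t"
    and C: "C \<subseteq> EH" and f: "f \<in> C"
    and smin: "\<forall>g\<in>C. s \<le> card (Ve g)" and s2: "2 \<le> s" and lam: "real s < lam"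
  shows "real (card (nbhd EH Ve f \<inter> C)) \<le> (1/(real s - 1) - 1/(lam - 1)) * (\<Sum>v\<in>Ve f. light_load C Ve lam v)
            + real (card (Ve f)) * (real t * (real (card VH) - 1) / (lam - 1))"
proof -
  have finE: "finite EH" and finV: "finite VH" and subV: "Ve f \<subseteq> VH"
    using hg f C unfolding hypergraph_def by auto
  have finf: "finite (Ve f)" using subV finV finite_subset by blast
  have "nbhd EH Ve f \<inter> C \<subseteq> (\<Union>v\<in>Ve f. {g\<in>C. v \<in> Ve g})"
    unfolding nbhd_def by blast
  then have "card (nbhd EH Ve f \<inter> C) \<le> card (\<Union>v\<in>Ve f. {g\<in>C. v \<in> Ve g})"
    by (rule card_mono[rotated]) (use finf finE C in \<open>auto intro: finite_subset\<close>)
  also have "\<dots> \<le> (\<Sum>v\<in>Ve f. card {g\<in>C. v \<in> Ve g})"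
    by (rule card_UN_le[OF finf])
  finally have cnat: "card (nbhd EH Ve f \<inter> C) \<le> (\<Sum>v\<in>Ve f. card {g\<in>C. v \<in> Ve g})" .
  have "real (card (nbhd EH Ve f \<inter> C)) \<le> real (\<Sum>v\<in>Ve f. card {g\<in>C. v \<in> Ve g})"
    using cnat by (rule of_nat_mono)
  also have "\<dots> = (\<Sum>v\<in>Ve f. real (card {g\<in>C. v \<in> Ve g}))" by (rule of_nat_sum)
  also have "\<dots> \<le> (\<Sum>v\<in>Ve f. (1/(real s - 1) - 1/(lam - 1)) * light_load C Ve lam v
            + real t * (real (card VH) - 1) / (lam - 1))"
    by (rule sum_mono, rule card_edges_through_vertex_le[OF hg cd C _ smin s2 lam]) (use subV in auto)
  also have "\<dots> = (1/(real s - 1) - 1/(lam - 1)) * (\<Sum>v\<in>Ve f. light_load C Ve lam v)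
            + real (card (Ve f)) * (real t * (real (card VH) - 1) / (lam - 1))"
    by (simp add: sum.distrib sum_distrib_left)
  finally show ?thesis .
qed

lemma sum_light_load:
  assumes hg: "hypergraph VH EH Ve" and C: "C \<subseteq> EH"
  shows "(\<Sum>u\<in>VH. light_load C Ve lam u) =
     (\<Sum>g\<in>{g\<in>C. real (card (Ve g)) \<le> lam}. real (card (Ve g)) * (real (card (Ve g)) - 1))"
proof -
  let ?W = "{g\<in>C. real (card (Ve g)) \<le> lam}"
  have finE: "finite EH" and finV: "finite VH" and subV: "\<forall>e\<in>EH. Ve e \<subseteq> VH"
    using hg unfolding hypergraph_def by auto
  have finW: "finite ?W" by (rule finite_subset[OF _ finE]) (use C in auto)
  have "(\<Sum>u\<in>VH. light_load C Ve lam u) = (\<Sum>u\<in>VH. \<Sum>g\<in>{g\<in>?W. u \<in> Ve g}. real (card (Ve g)) - 1)"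
    unfolding light_load_def by (rule sum.cong[OF refl], rule sum.cong) auto
  also have "\<dots> = (\<Sum>g\<in>?W. \<Sum>u\<in>{u\<in>VH. u \<in> Ve g}. real (card (Ve g)) - 1)"
    by (rule sum.swap_restrict[OF finV finW])
  also have "\<dots> = (\<Sum>g\<in>?W. real (card (Ve g)) * (real (card (Ve g)) - 1))"
  proof (rule sum.cong[OF refl])
    fix g assume g: "g \<in> ?W"
    then have "{u\<in>VH. u \<in> Ve g} = Ve g" using subV C by auto
    then show "(\<Sum>u\<in>{u\<in>VH. u \<in> Ve g}. real (card (Ve g)) - 1) = real (card (Ve g)) * (real (card (Ve g)) - 1)"
      by simp
  qed
  finally show ?thesis .
qed

lemma of_nat_choose_two: "real (m choose 2) = real m * (real m - 1) / 2"
proof -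
  have "even (m * (m - 1))" by auto
  then have "real (m * (m - 1) div 2) = real (m * (m - 1)) / 2"
    by (simp add: real_of_nat_div)
  then show ?thesis by (cases m) (simp_all add: choose_two algebra_simps)
qed

lemma vol_eq_sum:
  "vol VH Ve W = (\<Sum>g\<in>W. real (card (Ve g)) * (real (card (Ve g)) - 1)) /
      (real (card VH) * (real (card VH) - 1))"
  unfolding vol_def of_nat_choose_two
  by (simp add: sum_divide_distrib[symmetric])

section \<open>The volume of a core\<close>

lemma exists_sum_le_card_mult:
  fixes f :: "'a \<Rightarrow> real"
  assumes "finite A" and "A \<noteq> {}"
  shows "\<exists>v\<in>A. sum f A \<le> real (card A) * f v"
proof -
  have "Max (f ` A) \<in> f ` A" using assms by simp
  then obtain v where "v \<in> A" "f v = Max (f ` A)" by (metis imageE)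
  then have "sum f A \<le> real (card A) * f v"
    using sum_bounded_above[of A f "f v"] assms by simp
  with \<open>v \<in> A\<close> show ?thesis ..
qed

lemma core_edge_heavy_vertex:
  assumes hg: "hypergraph VH EH Ve" and cd: "codegree_le VH EH Ve t"
    and C: "C \<subseteq> EH" and e: "e \<in> C" and smin: "\<forall>g\<in>C. s \<le> card (Ve g)"
    and se: "card (Ve e) = s" and s2: "2 \<le> s" and l0: "real s < lam0" and p: "0 \<le> p"
    and deg: "real t * p * real (card VH) < real (card (nbhd EH Ve e \<inter> C))"
    and y: "y * ((1 / (real s - 1) - 1 / (lam0 - 1)) * real s * (lam0 - 1)) \<le> p - real s / (lam0 - 1)"
  obtains v0 where "v0 \<in> Ve e"
    "real t * (real (card VH) - 1) * y \<le> real (card {g\<in>C. v0 \<in> Ve g \<and> real (card (Ve g)) \<le> lam0})"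
proof -
  define M where "M = real t * (real (card VH) - 1)"
  define k0 where "k0 = 1 / (real s - 1) - 1 / (lam0 - 1)"
  have k0: "0 < k0" unfolding k0_def using l0 s2 by (simp add: frac_less2)
  have "e \<in> EH" using e C by auto
  note edge = hypergraph_edgeD[OF hg this]
  obtain v0 where v0: "v0 \<in> Ve e"
    and sum_le: "(\<Sum>v\<in>Ve e. light_load C Ve lam0 v) \<le> real s * light_load C Ve lam0 v0"
    using exists_sum_le_card_mult[OF edge(2)] edge(3) se by fastforce
  have "1 \<le> card VH" using v0 edge(1) hg unfolding hypergraph_def by (simp add: Suc_le_eq card_gt_0_iff) blast
  then have M: "0 \<le> M" unfolding M_def by simp
  from sum_le have "k0 * (\<Sum>v\<in>Ve e. light_load C Ve lam0 v) \<le> k0 * real s * light_load C Ve lam0 v0"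
    using k0 by (simp add: mult_left_mono)
  moreover have "real (card (nbhd EH Ve e \<inter> C))
      \<le> k0 * (\<Sum>v\<in>Ve e. light_load C Ve lam0 v) + real s * (M / (lam0 - 1))"
    using card_nbhd_inter_le[OF hg cd C e smin s2 l0] se unfolding k0_def M_def by simp
  moreover have "p * M = real t * p * real (card VH) - real t * p" and "0 \<le> real t * p"
    unfolding M_def using p by (simp_all add: algebra_simps)
  moreover have "M * (p - real s / (lam0 - 1)) = p * M - real s * (M / (lam0 - 1))"
    by (simp add: algebra_simps)
  ultimately have heavy: "M * (p - real s / (lam0 - 1)) \<le> k0 * real s * light_load C Ve lam0 v0"
    using deg by linarith
  have "M * y * (k0 * real s * (lam0 - 1)) \<le> M * (p - real s / (lam0 - 1))"
    using mult_left_mono[OF y M] unfolding k0_def by (simp add: mult.assoc)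
  also have "\<dots> \<le> k0 * real s * light_load C Ve lam0 v0" by (rule heavy)
  also have "\<dots> \<le> k0 * real s * (real (card {g\<in>C. v0 \<in> Ve g \<and> real (card (Ve g)) \<le> lam0}) * (lam0 - 1))"
    using k0 by (intro mult_left_mono light_load_le_card) auto
  also have "\<dots> = real (card {g\<in>C. v0 \<in> Ve g \<and> real (card (Ve g)) \<le> lam0}) * (k0 * real s * (lam0 - 1))"
    by (simp add: ac_simps)
  finally have "M * y * (k0 * real s * (lam0 - 1))
      \<le> real (card {g\<in>C. v0 \<in> Ve g \<and> real (card (Ve g)) \<le> lam0}) * (k0 * real s * (lam0 - 1))" .
  moreover have "0 < k0 * real s * (lam0 - 1)" using k0 l0 s2 by simp
  ultimately show ?thesis using that v0(1) unfolding M_def by (meson mult_right_le_imp_le)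
qed

lemma core_edge_light_mass:
  assumes hg: "hypergraph VH EH Ve" and cd: "codegree_le VH EH Ve t"
    and C: "C \<subseteq> EH" and g: "g \<in> C" and smin: "\<forall>g\<in>C. s \<le> card (Ve g)"
    and s2: "2 \<le> s" and l1: "real s < lam1" and p: "0 \<le> p"
    and v0: "v0 \<in> Ve g" and size: "real (card (Ve g)) \<le> lam0"
    and deg: "real t * p * real (card VH) < real (card (nbhd EH Ve g \<inter> C))"
    and z: "(z + 1) * (1 / (real s - 1) - 1 / (lam1 - 1)) \<le> p - lam0 / (lam1 - 1)"
  shows "real t * (real (card VH) - 1) * z \<le> (\<Sum>u\<in>Ve g - {v0}. light_load C Ve lam1 u)"
proof -
  define M where "M = real t * (real (card VH) - 1)"
  define k1 where "k1 = 1 / (real s - 1) - 1 / (lam1 - 1)"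
  define Z where "Z = (\<Sum>u\<in>Ve g - {v0}. light_load C Ve lam1 u)"
  have k1: "0 < k1" unfolding k1_def using l1 s2 by (simp add: frac_less2)
  have l1': "0 < lam1 - 1" using l1 s2 by simp
  have "g \<in> EH" using g C by auto
  note edge = hypergraph_edgeD[OF hg this]
  have "1 \<le> card VH" using v0 edge(1) hg unfolding hypergraph_def by (simp add: Suc_le_eq card_gt_0_iff) blast
  then have M: "0 \<le> M" unfolding M_def by simp
  have "(\<Sum>u\<in>Ve g. light_load C Ve lam1 u) = light_load C Ve lam1 v0 + Z"
    unfolding Z_def using edge(2) v0 by (simp add: sum.remove)
  also have "\<dots> \<le> M + Z"
    using light_load_le[OF hg cd C] v0 edge(1) unfolding M_def by auto
  finally have "k1 * (\<Sum>u\<in>Ve g. light_load C Ve lam1 u) \<le> k1 * (M + Z)"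
    using k1 by (simp add: mult_left_mono)
  moreover have "real (card (Ve g)) * (M / (lam1 - 1)) \<le> lam0 * (M / (lam1 - 1))"
    using size M l1' by (intro mult_right_mono) auto
  moreover have "real (card (nbhd EH Ve g \<inter> C))
      \<le> k1 * (\<Sum>u\<in>Ve g. light_load C Ve lam1 u) + real (card (Ve g)) * (M / (lam1 - 1))"
    using card_nbhd_inter_le[OF hg cd C g smin s2 l1] unfolding k1_def M_def by simp
  moreover have "p * M = real t * p * real (card VH) - real t * p" and "0 \<le> real t * p"
    unfolding M_def using p by (simp_all add: algebra_simps)
  moreover have "M * (p - lam0 / (lam1 - 1)) = p * M - lam0 * (M / (lam1 - 1))"
    by (simp add: algebra_simps)
  moreover have "M * ((z + 1) * k1) \<le> M * (p - lam0 / (lam1 - 1))"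
    using mult_left_mono[OF z M] unfolding k1_def .
  ultimately have "M * z * k1 \<le> Z * k1"
    using deg by (simp add: algebra_simps)
  then show ?thesis using k1 unfolding M_def Z_def by simp
qed

lemma vol_nonneg: "0 \<le> vol VH Ve W"
  unfolding vol_def by (intro divide_nonneg_nonneg sum_nonneg) auto

lemma light_mass_vol_bound:
  assumes hg: "hypergraph VH EH Ve" and cd: "codegree_le VH EH Ve t"
    and C: "C \<subseteq> EH" and G: "G \<subseteq> C" and v0: "v0 \<in> VH" and Gv: "\<forall>g\<in>G. v0 \<in> Ve g"
    and n2: "2 \<le> card VH"
    and mass: "\<forall>g\<in>G. Z0 \<le> (\<Sum>u\<in>Ve g - {v0}. light_load C Ve lam u)"
  shows "real (card G) * Z0
    \<le> vol VH Ve {g\<in>C. real (card (Ve g)) \<le> lam} * (real t * (real (card VH) * (real (card VH) - 1)))"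
proof -
  have "finite VH" using hg unfolding hypergraph_def by simp
  have "real (card G) * Z0 \<le> (\<Sum>g\<in>G. \<Sum>u\<in>Ve g - {v0}. light_load C Ve lam u)"
    using sum_bounded_below[of G Z0] mass by simp
  also have "\<dots> \<le> real t * (\<Sum>u\<in>VH - {v0}. light_load C Ve lam u)"
    using C G Gv light_load_nonneg[OF hg C] by (intro codegree_double_count[OF hg cd _ v0]) auto
  also have "\<dots> \<le> real t * (\<Sum>u\<in>VH. light_load C Ve lam u)"
    using \<open>finite VH\<close> light_load_nonneg[OF hg C] by (intro mult_left_mono sum_mono2) auto
  also have "\<dots> = vol VH Ve {g\<in>C. real (card (Ve g)) \<le> lam} * (real t * (real (card VH) * (real (card VH) - 1)))"
    unfolding sum_light_load[OF hg C] vol_eq_sum using n2 by simp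
  finally show ?thesis .
qed

lemma core_vol_ge:
  assumes hg: "hypergraph VH EH Ve" and cd: "codegree_le VH EH Ve t"
    and C: "C \<subseteq> EH" and e: "e \<in> C" and smin: "\<forall>g\<in>C. s \<le> card (Ve g)"
    and se: "card (Ve e) = s" and s2: "2 \<le> s"
    and l0: "real s < lam0" and l1: "real s < lam1" and p: "0 \<le> p"
    and core: "\<forall>c\<in>C. real t * p * real (card VH) < real (card (nbhd EH Ve c \<inter> C))"
    and y: "y * ((1 / (real s - 1) - 1 / (lam0 - 1)) * real s * (lam0 - 1)) \<le> p - real s / (lam0 - 1)"
    and z: "0 \<le> z" "(z + 1) * (1 / (real s - 1) - 1 / (lam1 - 1)) \<le> p - lam0 / (lam1 - 1)"
  shows "real t * (real (card VH) - 1) / real (card VH) * y * z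
    \<le> vol VH Ve {g\<in>C. real (card (Ve g)) \<le> lam1}"
proof (cases "t = 0")
  case True
  then show ?thesis using vol_nonneg by simp
next
  case False
  define n M where "n = real (card VH)" and "M = real t * (real (card VH) - 1)"
  obtain v0 where v0: "v0 \<in> Ve e"
    and My: "M * y \<le> real (card {g\<in>C. v0 \<in> Ve g \<and> real (card (Ve g)) \<le> lam0})"
    using core_edge_heavy_vertex[OF hg cd C e smin se s2 l0 p _ y] core e unfolding M_def by blast
  define G where "G = {g\<in>C. v0 \<in> Ve g \<and> real (card (Ve g)) \<le> lam0}"
  have eV: "Ve e \<subseteq> VH" "finite VH"
    using hypergraph_edgeD(1)[OF hg] e C hg unfolding hypergraph_def by auto
  then have "s \<le> card VH" using se card_mono by metis
  then have n2: "2 \<le> card VH" using s2 by linarith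
  have mass: "M * z \<le> (\<Sum>u\<in>Ve g - {v0}. light_load C Ve lam1 u)" if "g \<in> G" for g
    using core_edge_light_mass[OF hg cd C _ smin s2 l1 p _ _ _ z(2), of g v0] that core
    unfolding G_def M_def by auto
  define c where "c = real t * (n * (n - 1))"
  have "real (card G) * (M * z) \<le> vol VH Ve {g\<in>C. real (card (Ve g)) \<le> lam1} * c"
    unfolding c_def n_def using v0 eV n2 mass
    by (intro light_mass_vol_bound[OF hg cd C]) (auto simp: G_def)
  moreover have "(M * y) * (M * z) \<le> real (card G) * (M * z)"
    using My z(1) n2 unfolding G_def M_def by (intro mult_right_mono) auto
  moreover have "(M * y) * (M * z) = real t * (n - 1) / n * y * z * c"
    unfolding M_def n_def c_def using n2 by (simp add: field_simps)
  ultimately have "real t * (n - 1) / n * y * z * c \<le> vol VH Ve {g\<in>C. real (card (Ve g)) \<le> lam1} * c"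
    by linarith
  moreover have "0 < c" using False n2 unfolding c_def n_def by simp
  ultimately show ?thesis unfolding n_def by (rule mult_right_le_imp_le)
qed

section \<open>Parameter estimates\<close>

lemma harmonic_gap_eq:
  fixes S d :: real
  assumes "1 < S" and "0 < d"
  shows "1 / (S - 1) - 1 / ((1 + d) * S - 1) = S * d / ((S - 1) * ((1 + d) * S - 1))"
proof -
  have "0 < d * S" using assms by simp
  then have ne: "S - 1 \<noteq> 0" "(1 + d) * S - 1 \<noteq> 0" using assms(1) by (auto simp: distrib_right)
  have "1 / (S - 1) - 1 / ((1 + d) * S - 1) = (((1 + d) * S - 1) - (S - 1)) / ((S - 1) * ((1 + d) * S - 1))"
    using ne by (simp add: field_simps)
  also have "((1 + d) * S - 1) - (S - 1) = S * d" by (simp add: algebra_simps)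
  finally show ?thesis .
qed

lemma heavy_vertex_weight_le:
  fixes S d q \<tau> :: real
  assumes S: "1 < S" and d: "0 < d"
    and q: "0 \<le> q" "q \<le> (1 - \<tau>) - \<tau> / d - (1 - \<tau>) / (S * d)"
  shows "q * (S - 1) / ((1 + d) * S * S) * ((1 / (S - 1) - 1 / ((1 + d) * S - 1)) * S * ((1 + d) * S - 1))
    \<le> (1 - \<tau>) - S / ((1 + d) * S - 1)"
proof -
  define l where "l = (1 + d) * S"
  have "0 < d * S" using S d by simp
  then have l: "0 < l - 1" unfolding l_def using S by (simp add: distrib_right)
  have cancel: "x / (a * b) * S * b = x * S / a" "q * a / (D * S) * (x * S / a) = q * x / D"
    if "a \<noteq> 0" "b \<noteq> 0" "D \<noteq> 0" for x a b D
    using that S by (simp_all add: field_simps)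
  have "q * (S - 1) / (l * S) * ((1 / (S - 1) - 1 / (l - 1)) * S * (l - 1)) = S * d * q / l"
    unfolding harmonic_gap_eq[OF S d, folded l_def] using S l
    by (simp add: cancel(1) cancel(2)[of "S - 1" "l - 1" l] mult.commute)
  also have "\<dots> \<le> S * d * q / (l - 1)"
    using S d q(1) l by (intro divide_left_mono mult_nonneg_nonneg mult_pos_pos) auto
  also have "\<dots> \<le> S * d * ((1 - \<tau>) - \<tau> / d - (1 - \<tau>) / (S * d)) / (l - 1)"
    using S d q(2) l by (intro divide_right_mono mult_left_mono) auto
  also have "S * d * ((1 - \<tau>) - \<tau> / d - (1 - \<tau>) / (S * d)) = (1 - \<tau>) * (l - 1) - S"
    using S d unfolding l_def by (simp add: field_simps)
  also have "((1 - \<tau>) * (l - 1) - S) / (l - 1) = (1 - \<tau>) - S / (l - 1)"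
    using l by (simp add: diff_divide_distrib)
  finally show ?thesis unfolding l_def .
qed

lemma light_mass_weight_le:
  fixes S d0 d1 q \<tau> :: real
  assumes S: "1 < S" and d1: "0 < d1"
    and q: "q \<le> (1 - \<tau>) - \<tau> / d1 - d0 / d1 - (1 - \<tau>) / (S * d1)"
  shows "q * (S - 1) * (1 / (S - 1) - 1 / ((1 + d1) * S - 1))
    \<le> (1 - \<tau>) - (1 + d0) * S / ((1 + d1) * S - 1)"
proof -
  define l where "l = (1 + d1) * S"
  have "0 < d1 * S" using S d1 by simp
  then have l: "0 < l - 1" unfolding l_def using S by (simp add: distrib_right)
  have "q * (S - 1) * (1 / (S - 1) - 1 / (l - 1)) = S * d1 * q / (l - 1)"
    unfolding harmonic_gap_eq[OF S d1, folded l_def] using S by simp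
  also have "\<dots> \<le> S * d1 * ((1 - \<tau>) - \<tau> / d1 - d0 / d1 - (1 - \<tau>) / (S * d1)) / (l - 1)"
    using S d1 q l by (intro divide_right_mono mult_left_mono) auto
  also have "S * d1 * ((1 - \<tau>) - \<tau> / d1 - d0 / d1 - (1 - \<tau>) / (S * d1))
      = (1 - \<tau>) * (l - 1) - (1 + d0) * S"
    using S d1 unfolding l_def by (simp add: field_simps)
  also have "((1 - \<tau>) * (l - 1) - (1 + d0) * S) / (l - 1) = (1 - \<tau>) - (1 + d0) * S / (l - 1)"
    using l by (simp add: diff_divide_distrib)
  finally show ?thesis unfolding l_def .
qed

lemma window_density_estimate:
  fixes p u h d0 d1 :: real
  assumes u: "0 < u" "7 * u < p" and p: "p \<le> 1" and h: "0 \<le> h" "h \<le> u\<^sup>2 / 100"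
    and d: "0 \<le> d0" "d0 \<le> d1"
  shows "(p - 7 * u)\<^sup>2 / (1 + d1)
    \<le> (1 - h) * ((p - 101/100 * u) * (1 - h) * ((p - 68/100 * u) * (1 - h) - h)) / (1 + d0)"
proof -
  define X where "X = (p - 101/100 * u) * (p - 7/10 * u)"
  have u1: "u \<le> 1" using u p by simp
  then have "u\<^sup>2 \<le> u" using u by (simp add: power2_eq_square mult_left_le_one_le)
  then have hu: "h \<le> u / 100" using h by simp
  have pos: "0 \<le> p - 7/10 * u" "0 \<le> p - 101/100 * u" "0 \<le> 1 - h" using u hu u1 by auto
  have "(p - 68/100 * u) * h \<le> 1 * h" using u p h by (intro mult_right_mono) auto
  moreover have "(p - 68/100 * u) * (1 - h) - h = p - 68/100 * u - (p - 68/100 * u) * h - h"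
    by (simp add: right_diff_distrib)
  ultimately have second_factor: "p - 7/10 * u \<le> (p - 68/100 * u) * (1 - h) - h"
    using hu by linarith
  have "X \<le> 1 * 1"
    unfolding X_def using u p by (intro mult_mono) auto
  then have "X * (2 * h) \<le> 1 * (u\<^sup>2 / 50)"
    using h pos unfolding X_def by (intro mult_mono) auto
  moreover have "0 \<le> u * (1229/100 * p - 48313/1000 * u)"
    using u by (intro mult_nonneg_nonneg) auto
  moreover have "X - ((p - 7 * u)\<^sup>2 + u\<^sup>2 / 50) = u * (1229/100 * p - 48313/1000 * u)"
    unfolding X_def by (simp add: field_simps power2_eq_square)
  moreover have "X * (1 - 2 * h) \<le> (1 - h) * ((p - 101/100 * u) * (1 - h) * (p - 7/10 * u))"
  proof -
    have "X * (1 - 2 * h) \<le> X * ((1 - h) * (1 - h))"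
      using pos unfolding X_def by (intro mult_left_mono mult_nonneg_nonneg) (auto simp: algebra_simps)
    then show ?thesis unfolding X_def by (simp add: ac_simps)
  qed
  moreover have "(1 - h) * ((p - 101/100 * u) * (1 - h) * (p - 7/10 * u))
      \<le> (1 - h) * ((p - 101/100 * u) * (1 - h) * ((p - 68/100 * u) * (1 - h) - h))"
    using pos by (intro mult_left_mono[OF mult_left_mono[OF second_factor]] mult_nonneg_nonneg)
  ultimately have "(p - 7 * u)\<^sup>2
      \<le> (1 - h) * ((p - 101/100 * u) * (1 - h) * ((p - 68/100 * u) * (1 - h) - h))"
    by (simp add: algebra_simps)
  then have "(p - 7 * u)\<^sup>2 / (1 + d0)
      \<le> (1 - h) * ((p - 101/100 * u) * (1 - h) * ((p - 68/100 * u) * (1 - h) - h)) / (1 + d0)"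
    using d by (intro divide_right_mono) auto
  moreover have "(p - 7 * u)\<^sup>2 / (1 + d1) \<le> (p - 7 * u)\<^sup>2 / (1 + d0)"
    using d by (intro divide_left_mono) auto
  ultimately show ?thesis by linarith
qed

lemma size_bound_inverse:
  fixes a K S :: real
  assumes a: "0 < a" "a < 1" and K: "1 \<le> K" and S: "100 * K\<^sup>2 / a ^ 4 \<le> S"
  shows "0 < S" and "1 / S \<le> a ^ 4 / (100 * K\<^sup>2)" and "(1 - a ^ 4) / S \<le> a ^ 4 / (100 * K\<^sup>2)"
proof -
  have K0: "0 < K" using K by simp
  show S0: "0 < S" using S a K0 order.strict_trans2[of 0 "100 * K\<^sup>2 / a ^ 4" S] by simp
  show hS: "1 / S \<le> a ^ 4 / (100 * K\<^sup>2)" using S S0 a K0 by (simp add: field_simps)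
  have "(1 - a ^ 4) / S \<le> 1 / S"
    using a S0 by (intro divide_right_mono) auto
  then show "(1 - a ^ 4) / S \<le> a ^ 4 / (100 * K\<^sup>2)" using hS by linarith
qed

lemma small_parameters_d0:
  fixes a K S :: real
  assumes a: "0 < a" "a < 1" and K: "1 \<le> K" and S: "100 * K\<^sup>2 / a ^ 4 \<le> S"
  shows "1 / S \<le> (a / K)\<^sup>2 / 100" and "(1 - a ^ 4) / (S * (a ^ 3 * K)) \<le> a / K / 100"
    and "100 \<le> a / K * S" and "100 \<le> S"
proof -
  have K0: "0 < K" using K by simp
  note inv = size_bound_inverse[OF a K S]
  have "a ^ 4 / (100 * K\<^sup>2) \<le> a\<^sup>2 / (100 * K\<^sup>2)"
    using a K0 power_decreasing[of 2 4 a] by (simp add: divide_right_mono)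
  then show small: "1 / S \<le> (a / K)\<^sup>2 / 100"
    using inv(2) by (simp add: power_divide mult.commute)
  have "(1 - a ^ 4) / (S * (a ^ 3 * K)) = (1 - a ^ 4) / S / (a ^ 3 * K)" by simp
  also have "\<dots> \<le> a ^ 4 / (100 * K\<^sup>2) / (a ^ 3 * K)"
    using inv(3) a K0 by (intro divide_right_mono) auto
  also have "\<dots> = a / (100 * K ^ 3)" using a K0 by (simp add: field_simps power_numeral_reduce)
  also have "\<dots> \<le> a / (100 * K)"
    using a K0 K power_increasing[of 1 3 K] by (simp add: frac_le)
  finally show "(1 - a ^ 4) / (S * (a ^ 3 * K)) \<le> a / K / 100" by simp
  have u: "a / K \<le> 1" "0 \<le> a / K" using a K by simp_all
  then have "(a / K)\<^sup>2 / 100 \<le> a / K / 100"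
    unfolding power2_eq_square by (intro divide_right_mono mult_left_le_one_le) auto
  with small have "1 / S \<le> a / K / 100" by linarith
  then show uS: "100 \<le> a / K * S" using inv(1) by (simp add: field_simps)
  have "a / K * S \<le> 1 * S" using u inv(1) by (intro mult_right_mono) auto
  with uS show "100 \<le> S" by simp
qed

lemma small_parameters_d1:
  fixes a K S :: real
  assumes a: "0 < a" "a < 1" and K: "1 \<le> K" and S: "100 * K\<^sup>2 / a ^ 4 \<le> S"
  shows "a ^ 4 / (3 * a * K ^ 3) + a ^ 3 * K / (3 * a * K ^ 3) + (1 - a ^ 4) / (S * (3 * a * K ^ 3))
      \<le> 68/100 * (a / K)"
    and "a ^ 3 * K \<le> 3 * a * K ^ 3"
proof -
  have K0: "0 < K" using K by simp
  have a3: "a ^ 3 \<le> a" "a\<^sup>2 \<le> a"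
    using a power_decreasing[of 1 3 a] power_decreasing[of 1 2 a] by simp_all
  have K3: "K \<le> K\<^sup>2" "K \<le> K ^ 3" "K \<le> K ^ 5"
    using K by (simp_all add: power_increasing[of 1 _ K, simplified])
  have "a ^ 4 / (3 * a * K ^ 3) = a ^ 3 / (3 * K ^ 3)" using a K0 by (simp add: field_simps power_numeral_reduce)
  also have "\<dots> \<le> a / (3 * K)" using a3 K3 a K0 by (simp add: frac_le)
  finally have t1: "a ^ 4 / (3 * a * K ^ 3) \<le> a / K / 3" by simp
  have "a ^ 3 * K / (3 * a * K ^ 3) = a\<^sup>2 / (3 * K\<^sup>2)" using a K0 by (simp add: field_simps power_numeral_reduce)
  also have "\<dots> \<le> a / (3 * K)" using a3 K3 a K0 by (simp add: frac_le)
  finally have t2: "a ^ 3 * K / (3 * a * K ^ 3) \<le> a / K / 3" by simp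
  have "(1 - a ^ 4) / (S * (3 * a * K ^ 3)) = (1 - a ^ 4) / S / (3 * a * K ^ 3)" by simp
  also have "\<dots> \<le> a ^ 4 / (100 * K\<^sup>2) / (3 * a * K ^ 3)"
    using size_bound_inverse(3)[OF a K S] a K0 by (intro divide_right_mono) auto
  also have "\<dots> = a ^ 3 / (300 * K ^ 5)" using a K0 by (simp add: field_simps power_numeral_reduce)
  also have "\<dots> \<le> a / (100 * K)" using a3 K3 a K0 by (simp add: frac_le)
  finally have t3: "(1 - a ^ 4) / (S * (3 * a * K ^ 3)) \<le> a / K / 100" by simp
  have "0 \<le> a / K" using a K0 by simp
  moreover have "x + y + z \<le> 68/100 * w"
    if "0 \<le> w" "x \<le> w / 3" "y \<le> w / 3" "z \<le> w / 100" for x y z w :: real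
    using that by linarith
  ultimately show "a ^ 4 / (3 * a * K ^ 3) + a ^ 3 * K / (3 * a * K ^ 3) + (1 - a ^ 4) / (S * (3 * a * K ^ 3))
      \<le> 68/100 * (a / K)"
    using t1 t2 t3 by blast
  have "a\<^sup>2 \<le> 3 * K\<^sup>2"
    using a K power_le_one[of a 2] one_le_power[of K 2] by linarith
  then have "a * K * a\<^sup>2 \<le> a * K * (3 * K\<^sup>2)" using a K0 by (intro mult_left_mono) auto
  then show "a ^ 3 * K \<le> 3 * a * K ^ 3" by (simp add: power2_eq_square power3_eq_cube ac_simps)
qed

(* The auxiliary threshold lam0 = (1 + tau^(3/4) K) s is chosen so that tau/(tau^(3/4) K)
   = tau^(1/4)/K. *)
lemma exists_window_weights:
  fixes a K S lam0 lam1 :: real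
  assumes a: "0 < a" "a < 1" and K: "1 \<le> K" and pz: "0 < 1 - a ^ 4 - 7 * a / K"
    and S: "100 * K\<^sup>2 / a ^ 4 \<le> S"
    and lam: "lam0 = (1 + a ^ 3 * K) * S" "lam1 = (1 + 3 * a * K ^ 3) * S"
  obtains y z where "0 \<le> y" "0 \<le> z"
    "y * ((1 / (S - 1) - 1 / (lam0 - 1)) * S * (lam0 - 1)) \<le> (1 - a ^ 4) - S / (lam0 - 1)"
    "(z + 1) * (1 / (S - 1) - 1 / (lam1 - 1)) \<le> (1 - a ^ 4) - lam0 / (lam1 - 1)"
    "(1 - a ^ 4 - 7 * a / K)\<^sup>2 / (1 + 3 * a * K ^ 3) \<le> (1 - 1 / S) * (y * z)"
proof -
  define u p d0 d1 where "u = a / K" and "p = 1 - a ^ 4" and "d0 = a ^ 3 * K" and "d1 = 3 * a * K ^ 3"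
  define q0 q1 where "q0 = p - 101/100 * u" and "q1 = p - 68/100 * u"
  define y z where "y = q0 * (S - 1) / ((1 + d0) * S * S)" and "z = q1 * (S - 1) - 1"
  have u: "0 < u" "7 * u < p" and p: "p \<le> 1"
    using a K pz unfolding u_def p_def by (auto simp: power_le_one)
  have d: "0 < d0" "0 < d1" "d0 \<le> d1"
    using a K small_parameters_d1(2)[OF a K S] unfolding d0_def d1_def by auto
  note small = small_parameters_d0[OF a K S, folded u_def p_def d0_def]
  note S100 = small(4)
  have "a ^ 4 / d1 + d0 / d1 + p / (S * d1) \<le> 68/100 * u"
    using small_parameters_d1(1)[OF a K S] unfolding u_def p_def d0_def d1_def .
  have "a ^ 4 / d0 = u" unfolding d0_def u_def using a by (simp add: power_numeral_reduce)
  then have "q0 \<le> (1 - a ^ 4) - a ^ 4 / d0 - (1 - a ^ 4) / (S * d0)"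
    using small(2) unfolding q0_def p_def by linarith
  moreover have q0: "0 \<le> q0" using u unfolding q0_def by simp
  ultimately have y_ok: "y * ((1 / (S - 1) - 1 / ((1 + d0) * S - 1)) * S * ((1 + d0) * S - 1))
      \<le> p - S / ((1 + d0) * S - 1)"
    unfolding y_def p_def using S100 d by (intro heavy_vertex_weight_le) auto
  have "q1 \<le> (1 - a ^ 4) - a ^ 4 / d1 - d0 / d1 - (1 - a ^ 4) / (S * d1)"
    using \<open>a ^ 4 / d1 + d0 / d1 + p / (S * d1) \<le> 68/100 * u\<close> unfolding q1_def p_def by linarith
  then have z_ok: "(z + 1) * (1 / (S - 1) - 1 / ((1 + d1) * S - 1))
      \<le> p - (1 + d0) * S / ((1 + d1) * S - 1)"
    unfolding z_def p_def using S100 d by (simp add: light_mass_weight_le)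
  have "6 * u * (S - 1) \<le> q1 * (S - 1)" unfolding q1_def using u S100 by (intro mult_right_mono) auto
  moreover have "6 * u * (S - 1) = 6 * (u * S) - 6 * u" by (simp add: algebra_simps)
  ultimately have "0 \<le> z" using small(3) u p unfolding z_def by linarith
  have "0 \<le> y" unfolding y_def using q0 S100 d by auto
  have "q0 * (S - 1) / (D * S * S) * (q1 * (S - 1) - 1)
      = q0 * (1 - 1 / S) * (q1 * (1 - 1 / S) - 1 / S) / D" if "D \<noteq> 0" for D
    using that S100 by (simp add: field_simps)
  then have "(p - 7 * u)\<^sup>2 / (1 + d1) \<le> (1 - 1 / S) * (y * z)"
    using window_density_estimate[OF u p _ small(1) _ d(3)] S100 d
    unfolding y_def z_def q0_def q1_def by simp
  with \<open>0 \<le> y\<close> \<open>0 \<le> z\<close> y_ok z_ok show ?thesis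
    unfolding lam u_def p_def d0_def d1_def times_divide_eq_right by (rule that[unfolded lam])
qed

lemma core_window_vol_ge:
  fixes a K :: real
  assumes hg: "hypergraph VH EH Ve" and cd: "codegree_le VH EH Ve t"
    and C: "C \<subseteq> EH" and e: "e \<in> C" and smin: "\<forall>g\<in>C. card (Ve e) \<le> card (Ve g)"
    and a: "0 < a" "a < 1" and K: "1 \<le> K" and pz: "0 < 1 - a ^ 4 - 7 * a / K"
    and big: "100 * K\<^sup>2 / a ^ 4 \<le> real (card (Ve e))"
    and core: "\<forall>c\<in>C. real t * (1 - a ^ 4) * real (card VH) < real (card (nbhd EH Ve c \<inter> C))"
  shows "real t * (1 - a ^ 4 - 7 * a / K)\<^sup>2 / (1 + 3 * a * K ^ 3)
    \<le> vol VH Ve {g\<in>C. real (card (Ve g)) \<le> (1 + 3 * a * K ^ 3) * real (card (Ve e))}"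
proof -
  define S lam0 lam1 where "S = real (card (Ve e))"
    and "lam0 = (1 + a ^ 3 * K) * S" and "lam1 = (1 + 3 * a * K ^ 3) * S"
  define n where "n = real (card VH)"
  obtain y z where yz: "0 \<le> y" "0 \<le> z"
    and y: "y * ((1 / (S - 1) - 1 / (lam0 - 1)) * S * (lam0 - 1)) \<le> (1 - a ^ 4) - S / (lam0 - 1)"
    and z: "(z + 1) * (1 / (S - 1) - 1 / (lam1 - 1)) \<le> (1 - a ^ 4) - lam0 / (lam1 - 1)"
    and w: "(1 - a ^ 4 - 7 * a / K)\<^sup>2 / (1 + 3 * a * K ^ 3) \<le> (1 - 1 / S) * (y * z)"
    using exists_window_weights[OF a K pz big[folded S_def] lam0_def lam1_def] by blast
  have K0: "0 < K" using K by simp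
  have S100: "100 \<le> S" by (rule small_parameters_d0(4)[OF a K big[folded S_def]])
  have "0 < a ^ 3 * K" "0 < 3 * a * K ^ 3" using a K0 by simp_all
  then have lam: "S < lam0" "S < lam1" unfolding lam0_def lam1_def using S100 by simp_all
  have "S \<le> n"
    using e C hypergraph_edgeD(1)[OF hg] hg unfolding S_def n_def hypergraph_def
    by (auto intro: card_mono)
  then have "1 - 1 / S \<le> (n - 1) / n"
    using S100 by (simp add: diff_divide_distrib frac_le)
  then have "(1 - 1 / S) * (y * z) \<le> (n - 1) / n * (y * z)"
    using yz by (intro mult_right_mono) auto
  with w have "real t * ((1 - a ^ 4 - 7 * a / K)\<^sup>2 / (1 + 3 * a * K ^ 3))
      \<le> real t * ((n - 1) / n * (y * z))"
    by (intro mult_left_mono) auto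
  also have "\<dots> = real t * (n - 1) / n * y * z" by (simp add: mult.assoc)
  also have "\<dots> \<le> vol VH Ve {g\<in>C. real (card (Ve g)) \<le> lam1}"
  proof -
    have "2 \<le> card (Ve e)" "0 \<le> 1 - a ^ 4" using S100 a unfolding S_def by (simp_all add: power_le_one)
    from core_vol_ge[OF hg cd C e smin refl this(1) lam[unfolded S_def] this(2) core
        y[unfolded S_def] yz(2) z[unfolded S_def]]
    show ?thesis unfolding n_def .
  qed
  finally show ?thesis unfolding lam1_def S_def by simp
qed

lemma peeling_order_last_core_edge:
  assumes P: "peeling_order EH Ve B EH R C" and m: "m \<in> C" "\<forall>x\<in>C. (x, m) \<in> R"
  shows "\<forall>g\<in>C. card (Ve m) \<le> card (Ve g)"
    and "\<forall>f\<in>EH. (m, f) \<in> R \<and> f \<noteq> m \<longrightarrow> real (back_deg EH Ve R f) \<le> B"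
    and "\<forall>e\<in>EH. \<forall>f\<in>EH. (f, e) \<in> R \<and> (e, m) \<in> R \<longrightarrow> card (Ve e) \<le> card (Ve f)"
proof -
  have R: "linear_order_on EH R" "C \<subseteq> EH" "\<forall>x\<in>C. \<forall>y\<in>EH - C. (x, y) \<in> R"
    "\<forall>y\<in>EH - C. real (back_deg EH Ve R y) \<le> B"
    "\<forall>(f, e)\<in>R. e \<in> C \<longrightarrow> f \<in> C \<longrightarrow> card (Ve e) \<le> card (Ve f)"
    using P unfolding peeling_order_def by auto
  have tr: "trans R" and an: "antisym R"
    using R(1) unfolding linear_order_on_def partial_order_on_def preorder_on_def by auto
  have seg: "{x\<in>EH. (x, m) \<in> R} = C" by (rule initial_segment_eq[OF R(1-3) m])
  show "\<forall>g\<in>C. card (Ve m) \<le> card (Ve g)" using R(5) m by blast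
  show "\<forall>f\<in>EH. (m, f) \<in> R \<and> f \<noteq> m \<longrightarrow> real (back_deg EH Ve R f) \<le> B"
  proof (intro ballI impI)
    fix f assume "f \<in> EH" "(m, f) \<in> R \<and> f \<noteq> m"
    moreover from this have "f \<notin> C" using m an by (auto dest: antisymD)
    ultimately show "real (back_deg EH Ve R f) \<le> B" using R(4) by blast
  qed
  show "\<forall>e\<in>EH. \<forall>f\<in>EH. (f, e) \<in> R \<and> (e, m) \<in> R \<longrightarrow> card (Ve e) \<le> card (Ve f)"
  proof (intro ballI impI)
    fix e f assume ef: "e \<in> EH" "f \<in> EH" "(f, e) \<in> R \<and> (e, m) \<in> R"
    then have "(f, m) \<in> R" using tr by (auto dest: transD)
    then have "e \<in> C" "f \<in> C" using ef seg by auto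
    then show "card (Ve e) \<le> card (Ve f)" using R(5) ef by blast
  qed
qed

lemma size_window_bounds:
  fixes c :: real
  assumes "finite C" and m: "m \<in> C" "\<forall>g\<in>C. card (Ve m) \<le> card (Ve g)" and "1 \<le> c"
  defines "W \<equiv> {g\<in>C. real (card (Ve g)) \<le> c * real (card (Ve m))}"
  shows "m \<in> W" and "Min ((\<lambda>g. card (Ve g)) ` W) = card (Ve m)"
    and "real (Max ((\<lambda>g. card (Ve g)) ` W)) \<le> c * real (Min ((\<lambda>g. card (Ve g)) ` W))"
proof -
  have "1 * real (card (Ve m)) \<le> c * real (card (Ve m))"
    using \<open>1 \<le> c\<close> by (intro mult_right_mono) auto
  then show mW: "m \<in> W" unfolding W_def using m by simp
  have fin: "finite W" unfolding W_def using \<open>finite C\<close> by simp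
  show Min: "Min ((\<lambda>g. card (Ve g)) ` W) = card (Ve m)"
    using mW fin m(2) unfolding W_def by (intro antisym Min_le Min.boundedI) auto
  have "Max ((\<lambda>g. card (Ve g)) ` W) \<in> (\<lambda>g. card (Ve g)) ` W" using mW fin by (intro Max_in) auto
  then show "real (Max ((\<lambda>g. card (Ve g)) ` W)) \<le> c * real (Min ((\<lambda>g. card (Ve g)) ` W))"
    unfolding Min unfolding W_def by auto
qed

lemma ordering_or_dense_window:
  fixes a K :: real
  assumes hg: "hypergraph VH EH Ve" and cd: "codegree_le VH EH Ve t"
    and a: "0 < a" "a < 1" and K: "1 \<le> K" and pz: "0 < 1 - a ^ 4 - 7 * a / K"
    and big: "\<forall>e\<in>EH. 100 * K\<^sup>2 / a ^ 4 \<le> real (card (Ve e))"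
  defines "B \<equiv> real t * (1 - a ^ 4) * real (card VH)"
  shows "\<exists>R. R \<subseteq> EH \<times> EH \<and> linear_order_on EH R \<and>
     ((\<forall>e\<in>EH. real (back_deg EH Ve R e) \<le> B) \<or>
      (\<exists>W estar. W \<subseteq> EH \<and> W \<noteq> {} \<and>
         real (Max ((\<lambda>e. card (Ve e)) ` W)) \<le> (1 + 3 * a * K ^ 3) * real (Min ((\<lambda>e. card (Ve e)) ` W)) \<and>
         vol VH Ve W \<ge> real t * (1 - a ^ 4 - 7 * a / K) ^ 2 / (1 + 3 * a * K ^ 3) \<and>
         estar \<in> W \<and> (\<forall>w\<in>W. (w, estar) \<in> R) \<and>
         (\<forall>f\<in>EH. (estar, f) \<in> R \<and> f \<noteq> estar \<longrightarrow> real (back_deg EH Ve R f) \<le> B) \<and>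
         (\<forall>e\<in>EH. \<forall>f\<in>EH. (f, e) \<in> R \<and> (e, estar) \<in> R \<longrightarrow> card (Ve f) \<ge> card (Ve e))))"
proof -
  have finE: "finite EH" using hg unfolding hypergraph_def by simp
  obtain R C where P: "peeling_order EH Ve B EH R C"
    using exists_peeling_order[OF finE] by blast
  then have R: "R \<subseteq> EH \<times> EH" "linear_order_on EH R" and C: "C \<subseteq> EH"
    and core: "\<forall>c\<in>C. B < real (card (nbhd EH Ve c \<inter> C))"
    and outside: "\<forall>y\<in>EH - C. real (back_deg EH Ve R y) \<le> B"
    unfolding peeling_order_def by auto
  show ?thesis
  proof (cases "C = {}")
    case True
    then show ?thesis using R outside by auto
  next
    case False
    then obtain m where m: "m \<in> C" "\<forall>x\<in>C. (x, m) \<in> R"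
      using linear_order_on_finite_has_greatest[OF R(2) _ False C] finE C finite_subset by blast
    note last = peeling_order_last_core_edge[OF P m]
    define W where "W = {g\<in>C. real (card (Ve g)) \<le> (1 + 3 * a * K ^ 3) * real (card (Ve m))}"
    have "1 \<le> 1 + 3 * a * K ^ 3" using a K by simp
    note window = size_window_bounds[OF finite_subset[OF C finE] m(1) last(1) this, folded W_def]
    have "real t * (1 - a ^ 4 - 7 * a / K)\<^sup>2 / (1 + 3 * a * K ^ 3) \<le> vol VH Ve W"
      unfolding W_def using m(1) C big core unfolding B_def
      by (intro core_window_vol_ge[OF hg cd C m(1) last(1) a K pz]) auto
    moreover have "W \<subseteq> EH" "\<forall>w\<in>W. (w, m) \<in> R" using C m unfolding W_def by auto
    ultimately show ?thesis
      using R window last(2,3) by blast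
  qed
qed

lemma nondecr2_scaled_product: "nondecr2 (\<lambda>x y. x * y\<^sup>2 / 100)"
  unfolding nondecr2_def
proof (intro conjI allI impI)
  fix a b a' b' :: real
  assume h: "0 < a \<and> a \<le> a' \<and> a' \<le> 1 \<and> 0 < b \<and> b \<le> b' \<and> b' \<le> 1"
  then have "b\<^sup>2 \<le> b'\<^sup>2" by (intro power_mono) auto
  then show "a * b\<^sup>2 / 100 \<le> a' * b'\<^sup>2 / 100" using h by (simp add: mult_mono)
next
  fix a b :: real
  assume h: "0 < a \<and> a \<le> 1 \<and> 0 < b \<and> b \<le> 1"
  then show "0 < a * b\<^sup>2 / 100" by simp
  have "b\<^sup>2 \<le> 1" using h by (simp add: power_le_one)
  then have "a * b\<^sup>2 \<le> 1 * 1" using h by (intro mult_mono) auto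
  then show "a * b\<^sup>2 / 100 \<le> 1" by simp
qed

theorem lemma3p3:
  "\<exists>f1. nondecr2 f1 \<and>
    (\<forall>(\<tau>::real) (K::real) (r1::nat).
      0 < \<tau> \<and> \<tau> < 1 \<and> 1 \<le> K \<and> 1 - \<tau> - 7 * \<tau> powr (1/4) / K > 0 \<and>
      0 < r1 \<and> 1 / real r1 \<le> f1 \<tau> (1 / K) \<longrightarrow>
      (\<exists>n0::nat. 0 < n0 \<and>
        (\<forall>(t::nat) (n::nat) (VH::'v set) (EH::'e set) (Ve::'e \<Rightarrow> 'v set).
          n \<ge> n0 \<and> hypergraph VH EH Ve \<and> card VH = n \<and> codegree_le VH EH Ve t \<and>
          (\<forall>e\<in>EH. card (Ve e) \<ge> r1) \<longrightarrow>
          (\<exists>R. R \<subseteq> EH \<times> EH \<and> linear_order_on EH R \<and>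
             ((\<forall>e\<in>EH. real (back_deg EH Ve R e) \<le> real t * (1 - \<tau>) * real n) \<or>
              (\<exists>W estar. W \<subseteq> EH \<and> W \<noteq> {} \<and>
                 real (Max ((\<lambda>e. card (Ve e)) ` W))
                   \<le> (1 + 3 * \<tau> powr (1/4) * K ^ 3) * real (Min ((\<lambda>e. card (Ve e)) ` W)) \<and>
                 vol VH Ve W \<ge> real t * (1 - \<tau> - 7 * \<tau> powr (1/4) / K) ^ 2
                                  / (1 + 3 * \<tau> powr (1/4) * K ^ 3) \<and>
                 estar \<in> W \<and> (\<forall>w\<in>W. (w, estar) \<in> R) \<and>
                 (\<forall>f\<in>EH. (estar, f) \<in> R \<and> f \<noteq> estar \<longrightarrow>
                    real (back_deg EH Ve R f) \<le> real t * (1 - \<tau>) * real n) \<and>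
                 (\<forall>e\<in>EH. \<forall>f\<in>EH. (f, e) \<in> R \<and> (e, estar) \<in> R \<longrightarrow>
                    card (Ve f) \<ge> card (Ve e))))))))"
proof (intro exI[of _ "\<lambda>x y. x * y\<^sup>2 / 100"] conjI allI impI, goal_cases)
  case 1
  show ?case by (rule nondecr2_scaled_product)
next
  case (2 \<tau> K r1)
  then have \<tau>: "0 < \<tau>" "\<tau> < 1" and K: "1 \<le> K" and pz: "0 < 1 - \<tau> - 7 * \<tau> powr (1/4) / K"
    and r1: "0 < r1" "1 / real r1 \<le> \<tau> * (1 / K)\<^sup>2 / 100" by auto
  define a where "a = \<tau> powr (1/4)"
  have a4: "a ^ 4 = \<tau>" unfolding a_def using \<tau> by (simp add: powr_realpow[symmetric] powr_powr)
  have a: "0 < a" "a < 1" unfolding a_def using \<tau> powr_less_mono2[of "1/4" \<tau> 1] by auto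
  have "100 * K\<^sup>2 / a ^ 4 \<le> real r1"
    using r1 \<tau> K unfolding a4 by (simp add: field_simps)
  then have big: "\<forall>e\<in>EH. r1 \<le> card (Ve e) \<Longrightarrow> \<forall>e\<in>EH. 100 * K\<^sup>2 / a ^ 4 \<le> real (card (Ve e))"
    for EH and Ve :: "'e \<Rightarrow> 'v set" by (meson of_nat_le_iff order_trans)
  show ?case
  proof (intro exI[of _ 1] conjI allI impI, goal_cases)
    case (2 t n VH EH Ve)
    then have "hypergraph VH EH Ve" "codegree_le VH EH Ve t" "card VH = n"
      "\<forall>e\<in>EH. 100 * K\<^sup>2 / a ^ 4 \<le> real (card (Ve e))" using big by auto
    from ordering_or_dense_window[OF this(1,2) a K pz[folded a_def a4] this(4), unfolded a4] this(3)
    show ?case unfolding a_def[symmetric] by simp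
  qed simp
qed

end
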